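(* Let $k\ge2$, $\beta>0$, $J,B\in\mathbb{R}$, $\theta=\tanh(\beta J)$, $f_\theta(h)=\operatorname{arctanh}(\theta\tanh h)$, and let $(h,h')\in\mathbb{R}^2$ satisfy $$h=k f_\theta(h'+\beta B),\qquad h'=k f_\theta(h+\beta B).$$ Consider the periodic boundary condition $h_x=h$ if $d(x,x^0)$ is even and $h_x=h'$ if $d(x,x^0)$ is odd. Let $F_n=-\frac{1}{\beta|V_n|}\ln Z_n(\{h_x\})$ and $$d(t)=\frac{1}{2\beta}\ln\big(4\cosh[t+\beta(B+J)]\cosh[t+\beta(B-J)]\big).$$ Then $$\lim_{m\to\infty}F_{2m}=-\frac{1}{k+1}\big(k\,d(h)+d(h')\big),\qquad \lim_{m\to\infty}F_{2m+1}=-\frac{1}{k+1}\big(d(h)+k\,d(h')\big).$$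
   Context: $\Gamma^k=(V,L)$ is the Cayley tree in which every vertex has $k+1$ neighbours; $x^0\in V$ is a fixed root, $d(\cdot,\cdot)$ the graph distance, $V_n=\{x:d(x,x^0)\le n\}$, $W_n=\{x:d(x,x^0)=n\}$. For a boundary condition $\{h_x\in\mathbb{R}\}_{x\in V}$, $$Z_n(\{h_x\})=\sum_{\sigma\in\{-1,1\}^{V_n}}\exp\Big\{\beta J\sum_{\langle x,y\rangle\subset V_n}\sigma(x)\sigma(y)+\beta B\sum_{x\in V_n}\sigma(x)+\sum_{x\in W_n}h_x\sigma(x)\Big\},$$ the first sum running over nearest-neighbour pairs with both endpoints in $V_n$. *)

theory Defs
  imports Complex_Main "HOL-Library.FuncSet"
begin

text \<open>Concrete model of the Cayley tree with k+1 neighbours per vertex.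
  A vertex is the word of child choices along the unique path from the root x0 = [].
  The root has k+1 children (indices < k+1), every other vertex has k children
  (indices < k), so every vertex has degree k+1. The graph distance to the root
  is the length of the word; edges join x and x @ [a].\<close>

definition cayley_vertex :: "nat \<Rightarrow> nat list \<Rightarrow> bool" where
  "cayley_vertex k x \<longleftrightarrow> (\<forall>i<length x. x ! i < (if i = 0 then k + 1 else k))"

definition ball_V :: "nat \<Rightarrow> nat \<Rightarrow> nat list set" where
  "ball_V k n = {x. cayley_vertex k x \<and> length x \<le> n}"

definition sphere_W :: "nat \<Rightarrow> nat \<Rightarrow> nat list set" where
  "sphere_W k n = {x. cayley_vertex k x \<and> length x = n}"

text \<open>Nearest-neighbour pairs with both endpoints in V_n, each unordered edge
  listed once as (parent, child).\<close>
definition edges_V :: "nat \<Rightarrow> nat \<Rightarrow> (nat list \<times> nat list) set" where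
  "edges_V k n = {(x, y). x \<in> ball_V k n \<and> y \<in> ball_V k n \<and> (\<exists>a. y = x @ [a])}"

definition partition_fn :: "nat \<Rightarrow> real \<Rightarrow> real \<Rightarrow> real \<Rightarrow> (nat list \<Rightarrow> real) \<Rightarrow> nat \<Rightarrow> real" where
  "partition_fn k \<beta> J B hb n =
     (\<Sum>\<sigma> \<in> (ball_V k n \<rightarrow>\<^sub>E {-1, 1::real}).
        exp (\<beta> * J * (\<Sum>(x, y) \<in> edges_V k n. \<sigma> x * \<sigma> y)
             + \<beta> * B * (\<Sum>x \<in> ball_V k n. \<sigma> x)
             + (\<Sum>x \<in> sphere_W k n. hb x * \<sigma> x)))"

definition free_energy :: "nat \<Rightarrow> real \<Rightarrow> real \<Rightarrow> real \<Rightarrow> (nat list \<Rightarrow> real) \<Rightarrow> nat \<Rightarrow> real" where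
  "free_energy k \<beta> J B hb n =
     - (1 / (\<beta> * real (card (ball_V k n)))) * ln (partition_fn k \<beta> J B hb n)"

definition f_theta :: "real \<Rightarrow> real \<Rightarrow> real" where
  "f_theta \<theta> t = artanh (\<theta> * tanh t)"

definition d_fun :: "real \<Rightarrow> real \<Rightarrow> real \<Rightarrow> real \<Rightarrow> real" where
  "d_fun \<beta> J B t = 1 / (2 * \<beta>) * ln (4 * cosh (t + \<beta> * (B + J)) * cosh (t + \<beta> * (B - J)))"

end

theory Submission
  imports Defs
begin

text \<open>Adding the boundary layer W_(n+1) to V_n, each new spin interacts only with its parent
  and the boundary field, so it can be summed out: by the identity
  2 cosh(\<beta>J t + u) = (4 cosh(u + \<beta>J) cosh(u - \<beta>J))^(1/2) exp(t artanh(tanh(\<beta>J) tanh u))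
  for t = \<plusminus>1, the k children of a vertex x of W_n contribute the factor
  exp(\<beta> d(c))^k exp(k f_\<theta>(c + \<beta>B) \<sigma>(x)), where c is the field on W_(n+1).
  The fixed-point equations say precisely that k f_\<theta>(c + \<beta>B) is the field on W_n, so
  Z_(n+1) = exp(\<beta> d(c))^|W_(n+1)| Z_n.  As |W_(n+2)| = k |W_(n+1)| for n \<ge> 1, over two
  consecutive layers ln Z/\<beta> and |V_n| grow proportionally, with ratio the weighted average of d(h) and d(h') determined by
  the parity of n, and the free energy along each parity class converges to minus that ratio.\<close>

lemma cayley_vertex_snoc:
  "cayley_vertex k (x @ [a]) \<longleftrightarrow> cayley_vertex k x \<and> a < (if x = [] then k + 1 else k)"
  unfolding cayley_vertex_def by (auto simp: All_less_Suc nth_append cong: conj_cong)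

lemma cayley_vertex_butlast: "cayley_vertex k y \<Longrightarrow> cayley_vertex k (butlast y)"
  by (cases y rule: rev_cases) (auto simp: cayley_vertex_snoc)

lemma ball_V_Suc: "ball_V k (Suc n) = ball_V k n \<union> sphere_W k (Suc n)"
  unfolding ball_V_def sphere_W_def by auto

lemma ball_V_Int_sphere_W_Suc: "ball_V k n \<inter> sphere_W k (Suc n) = {}"
  unfolding ball_V_def sphere_W_def by auto

lemma butlast_sphere_W_Suc:
  "y \<in> sphere_W k (Suc n) \<Longrightarrow> butlast y \<in> sphere_W k n"
  unfolding sphere_W_def by (auto intro: cayley_vertex_butlast)

lemma sphere_W_subset_ball_V: "sphere_W k n \<subseteq> ball_V k n"
  unfolding ball_V_def sphere_W_def by auto

lemma finite_ball_V: "finite (ball_V k n)"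
proof (rule finite_subset)
  show "ball_V k n \<subseteq> {xs. set xs \<subseteq> {..<k+1} \<and> length xs \<le> n}"
    unfolding ball_V_def cayley_vertex_def
    by (force simp: in_set_conv_nth split: if_splits)
  show "finite {xs. set xs \<subseteq> {..<k+1} \<and> length xs \<le> n}"
    by (rule finite_lists_length_le) auto
qed

lemma finite_sphere_W: "finite (sphere_W k n)"
  using finite_subset[OF sphere_W_subset_ball_V finite_ball_V] .

lemma finite_edges_V: "finite (edges_V k n)"
  by (rule finite_subset[of _ "ball_V k n \<times> ball_V k n"]) (auto simp: edges_V_def finite_ball_V)

text \<open>Only the root has k + 1 children, hence the restriction to n \<ge> 1.\<close>
lemma sphere_W_Suc:
  assumes "n \<ge> 1"
  shows "sphere_W k (Suc n) = (\<lambda>(x, a). x @ [a]) ` (sphere_W k n \<times> {..<k})"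
proof (rule set_eqI, rule iffI)
  fix y assume y: "y \<in> sphere_W k (Suc n)"
  then have "y \<noteq> []" unfolding sphere_W_def by auto
  then obtain x a where y_eq: "y = x @ [a]" by (cases y rule: rev_cases) auto
  with y assms have "x \<in> sphere_W k n" "a < k"
    unfolding sphere_W_def by (auto simp: cayley_vertex_snoc split: if_splits)
  with y_eq show "y \<in> (\<lambda>(x, a). x @ [a]) ` (sphere_W k n \<times> {..<k})" by force
next
  fix y assume "y \<in> (\<lambda>(x, a). x @ [a]) ` (sphere_W k n \<times> {..<k})"
  with assms show "y \<in> sphere_W k (Suc n)"
    unfolding sphere_W_def by (auto simp: cayley_vertex_snoc)
qed

lemma sum_sphere_W_Suc_butlast:
  fixes \<phi> :: "nat list \<Rightarrow> 'a::semiring_1"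
  assumes "n \<ge> 1"
  shows "(\<Sum>y\<in>sphere_W k (Suc n). \<phi> (butlast y)) = of_nat k * (\<Sum>x\<in>sphere_W k n. \<phi> x)"
proof -
  have inj: "inj_on (\<lambda>(x, a). x @ [a]) (sphere_W k n \<times> {..<k})"
    by (auto simp: inj_on_def)
  have "(\<Sum>y\<in>sphere_W k (Suc n). \<phi> (butlast y)) = (\<Sum>(x, a)\<in>sphere_W k n \<times> {..<k}. \<phi> x)"
    unfolding sphere_W_Suc[OF assms] by (subst sum.reindex[OF inj]) (auto intro!: sum.cong)
  also have "\<dots> = (\<Sum>x\<in>sphere_W k n. of_nat k * \<phi> x)"
    by (simp add: sum.cartesian_product[symmetric])
  finally show ?thesis by (simp add: sum_distrib_left)
qed

lemma card_sphere_W_Suc: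
  "n \<ge> 1 \<Longrightarrow> card (sphere_W k (Suc n)) = k * card (sphere_W k n)"
  using sum_sphere_W_Suc_butlast[of n "\<lambda>_. 1 :: nat" k] by simp

lemma card_ball_V_Suc:
  "card (ball_V k (Suc n)) = card (ball_V k n) + card (sphere_W k (Suc n))"
  unfolding ball_V_Suc
  by (rule card_Un_disjoint) (auto simp: finite_ball_V finite_sphere_W ball_V_Int_sphere_W_Suc)

lemma card_ball_V_ge:
  assumes "k \<ge> 1"
  shows "n + 1 \<le> card (ball_V k n)"
proof -
  have "(\<lambda>i. replicate i 0) ` {..n} \<subseteq> ball_V k n"
    using assms unfolding ball_V_def cayley_vertex_def by auto
  moreover have "card ((\<lambda>i. replicate i (0::nat)) ` {..n}) = n + 1"
    by (subst card_image) (auto simp: inj_on_def)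
  ultimately show ?thesis
    by (metis card_mono finite_ball_V)
qed

lemma filterlim_card_ball_V:
  assumes "k \<ge> 1"
  shows "filterlim (\<lambda>n. real (card (ball_V k n))) at_top sequentially"
proof (rule filterlim_at_top_mono[OF filterlim_real_sequentially])
  show "\<forall>\<^sub>F n in sequentially. real n \<le> real (card (ball_V k n))"
    using card_ball_V_ge[OF assms] by (intro always_eventually allI) (simp add: Suc_leD)
qed

lemma edges_V_Suc:
  "edges_V k (Suc n) = edges_V k n \<union> (\<lambda>y. (butlast y, y)) ` sphere_W k (Suc n)"
proof (rule set_eqI, clarify)
  fix x y
  show "(x, y) \<in> edges_V k (Suc n) \<longleftrightarrow>
        (x, y) \<in> edges_V k n \<union> (\<lambda>y. (butlast y, y)) ` sphere_W k (Suc n)"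
  proof
    assume "(x, y) \<in> edges_V k (Suc n)"
    then show "(x, y) \<in> edges_V k n \<union> (\<lambda>y. (butlast y, y)) ` sphere_W k (Suc n)"
    proof (cases "length y \<le> n")
      case False
      with \<open>(x, y) \<in> edges_V k (Suc n)\<close> have "y \<in> sphere_W k (Suc n)" and "x = butlast y"
        unfolding edges_V_def ball_V_def sphere_W_def by auto
      then show ?thesis by blast
    qed (auto simp: edges_V_def ball_V_def)
  next
    assume "(x, y) \<in> edges_V k n \<union> (\<lambda>y. (butlast y, y)) ` sphere_W k (Suc n)"
    then show "(x, y) \<in> edges_V k (Suc n)"
      unfolding edges_V_def ball_V_def sphere_W_def
      by (auto intro: cayley_vertex_butlast)
        (metis append_butlast_last_id length_0_conv nat.distinct(1))
  qed
qed

lemma edges_V_Int_parent_edges: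
  "edges_V k n \<inter> (\<lambda>y. (butlast y, y)) ` sphere_W k (Suc n) = {}"
  unfolding edges_V_def ball_V_def sphere_W_def by auto

lemma sum_PiE_Un_disjoint:
  assumes "A \<inter> B = {}"
  shows "(\<Sum>\<sigma>\<in>(A \<union> B) \<rightarrow>\<^sub>E S. P \<sigma>) =
         (\<Sum>\<tau>\<in>A \<rightarrow>\<^sub>E S. \<Sum>\<rho>\<in>B \<rightarrow>\<^sub>E S. P (\<lambda>x. if x \<in> A then \<tau> x else \<rho> x))"
proof -
  have "(\<Sum>\<sigma>\<in>(A \<union> B) \<rightarrow>\<^sub>E S. P \<sigma>) =
        (\<Sum>(\<tau>, \<rho>)\<in>(A \<rightarrow>\<^sub>E S) \<times> (B \<rightarrow>\<^sub>E S). P (\<lambda>x. if x \<in> A then \<tau> x else \<rho> x))"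
    by (rule sum.reindex_bij_witness[of _ "\<lambda>(\<tau>, \<rho>) x. if x \<in> A then \<tau> x else \<rho> x"
          "\<lambda>\<sigma>. (restrict \<sigma> A, restrict \<sigma> B)"])
      (use assms in \<open>auto simp: PiE_def extensional_def fun_eq_iff Pi_def intro!: arg_cong[where f = P]\<close>)
  also have "\<dots> = (\<Sum>\<tau>\<in>A \<rightarrow>\<^sub>E S. \<Sum>\<rho>\<in>B \<rightarrow>\<^sub>E S. P (\<lambda>x. if x \<in> A then \<tau> x else \<rho> x))"
    by (rule sum.cartesian_product[symmetric])
  finally show ?thesis .
qed

lemma artanh_tanh_mult_tanh:
  fixes a u :: real
  shows "artanh (tanh a * tanh u) = (ln (cosh (u + a)) - ln (cosh (u - a))) / 2"
proof -
  have "cosh a * cosh u > 0" by simp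
  moreover have "cosh (u - a) > 0" by simp
  ultimately have "(1 + tanh a * tanh u) / (1 - tanh a * tanh u) = cosh (u + a) / cosh (u - a)"
    unfolding tanh_def cosh_add cosh_diff by (simp add: field_simps)
  then show ?thesis
    by (simp add: artanh_def ln_div)
qed

lemma sum_spin_exp:
  fixes a u t :: real
  assumes "t \<in> {-1, 1}"
  shows "(\<Sum>s\<in>{-1, 1}. exp (s * (a * t + u))) =
         exp (ln (4 * cosh (u + a) * cosh (u - a)) / 2 + t * artanh (tanh a * tanh u))"
proof -
  have ln_4: "ln (4::real) = 2 * ln 2"
    using ln_realpow[of 2 2] by simp
  have "(\<Sum>s\<in>{-1, 1}. exp (s * (a * t + u))) = 2 * cosh (a * t + u)"
    by (simp add: cosh_def)
  also have "\<dots> = exp (ln (2 * cosh (a * t + u)))"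
    by simp
  also have "ln (2 * cosh (a * t + u)) =
             ln (4 * cosh (u + a) * cosh (u - a)) / 2 + t * artanh (tanh a * tanh u)"
    using assms by (auto simp: artanh_tanh_mult_tanh ln_mult ln_4 field_simps)
  finally show ?thesis .
qed

definition bulk_log_weight :: "nat \<Rightarrow> real \<Rightarrow> real \<Rightarrow> real \<Rightarrow> nat \<Rightarrow> (nat list \<Rightarrow> real) \<Rightarrow> real" where
  "bulk_log_weight k \<beta> J B n \<sigma> =
     \<beta> * J * (\<Sum>(x, y) \<in> edges_V k n. \<sigma> x * \<sigma> y) + \<beta> * B * (\<Sum>x \<in> ball_V k n. \<sigma> x)"

lemma partition_fn_eq_bulk_log_weight:
  "partition_fn k \<beta> J B g n =
     (\<Sum>\<sigma>\<in>ball_V k n \<rightarrow>\<^sub>E {-1, 1}.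
        exp (bulk_log_weight k \<beta> J B n \<sigma> + (\<Sum>x\<in>sphere_W k n. g x * \<sigma> x)))"
  unfolding partition_fn_def bulk_log_weight_def ..

lemma partition_fn_pos: "partition_fn k \<beta> J B g n > 0"
  unfolding partition_fn_def
  by (rule sum_pos) (auto simp: finite_PiE finite_ball_V PiE_eq_empty_iff)

lemma bulk_log_weight_Suc:
  fixes k n :: nat and \<tau> \<rho> :: "nat list \<Rightarrow> real"
  defines "\<sigma> \<equiv> \<lambda>x. if x \<in> ball_V k n then \<tau> x else \<rho> x"
  shows "bulk_log_weight k \<beta> J B (Suc n) \<sigma> =
         bulk_log_weight k \<beta> J B n \<tau> +
         (\<Sum>y\<in>sphere_W k (Suc n). \<rho> y * (\<beta> * J * \<tau> (butlast y) + \<beta> * B))"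
proof -
  let ?W = "sphere_W k (Suc n)"
  have new_vertex: "butlast y \<in> ball_V k n" "y \<notin> ball_V k n" if "y \<in> ?W" for y
    using that butlast_sphere_W_Suc sphere_W_subset_ball_V ball_V_Int_sphere_W_Suc by blast+
  have "(\<Sum>(x, y) \<in> edges_V k (Suc n). \<sigma> x * \<sigma> y) =
        (\<Sum>(x, y) \<in> edges_V k n. \<sigma> x * \<sigma> y) + (\<Sum>(x, y) \<in> (\<lambda>y. (butlast y, y)) ` ?W. \<sigma> x * \<sigma> y)"
    unfolding edges_V_Suc
    by (rule sum.union_disjoint) (auto simp: finite_edges_V finite_sphere_W edges_V_Int_parent_edges)
  also have "(\<Sum>(x, y) \<in> edges_V k n. \<sigma> x * \<sigma> y) = (\<Sum>(x, y) \<in> edges_V k n. \<tau> x * \<tau> y)"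
    by (rule sum.cong) (auto simp: \<sigma>_def edges_V_def)
  also have "(\<Sum>(x, y) \<in> (\<lambda>y. (butlast y, y)) ` ?W. \<sigma> x * \<sigma> y) = (\<Sum>y\<in>?W. \<tau> (butlast y) * \<rho> y)"
    by (subst sum.reindex) (auto simp: inj_on_def \<sigma>_def new_vertex intro!: sum.cong)
  finally have edges: "(\<Sum>(x, y) \<in> edges_V k (Suc n). \<sigma> x * \<sigma> y) =
    (\<Sum>(x, y) \<in> edges_V k n. \<tau> x * \<tau> y) + (\<Sum>y\<in>?W. \<tau> (butlast y) * \<rho> y)" .
  have "(\<Sum>x \<in> ball_V k (Suc n). \<sigma> x) = (\<Sum>x \<in> ball_V k n. \<sigma> x) + (\<Sum>y\<in>?W. \<sigma> y)"
    unfolding ball_V_Suc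
    by (rule sum.union_disjoint) (auto simp: finite_ball_V finite_sphere_W ball_V_Int_sphere_W_Suc)
  also have "\<dots> = (\<Sum>x \<in> ball_V k n. \<tau> x) + (\<Sum>y\<in>?W. \<rho> y)"
    by (auto simp: \<sigma>_def new_vertex intro!: sum.cong arg_cong2[where f = "(+)"])
  finally have vertices: "(\<Sum>x \<in> ball_V k (Suc n). \<sigma> x) = (\<Sum>x \<in> ball_V k n. \<tau> x) + (\<Sum>y\<in>?W. \<rho> y)" .
  show ?thesis
    unfolding bulk_log_weight_def edges vertices
    by (simp add: algebra_simps sum.distrib sum_distrib_left)
qed

lemma partition_fn_Suc:
  "partition_fn k \<beta> J B g (Suc n) =
     (\<Sum>\<tau>\<in>ball_V k n \<rightarrow>\<^sub>E {-1, 1}. exp (bulk_log_weight k \<beta> J B n \<tau>) *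
        (\<Prod>y\<in>sphere_W k (Suc n). \<Sum>s\<in>{-1, 1}. exp (s * (\<beta> * J * \<tau> (butlast y) + (g y + \<beta> * B)))))"
proof -
  let ?W = "sphere_W k (Suc n)" and ?S = "{-1, 1 :: real}"
  have "partition_fn k \<beta> J B g (Suc n) =
    (\<Sum>\<tau>\<in>ball_V k n \<rightarrow>\<^sub>E ?S. \<Sum>\<rho>\<in>?W \<rightarrow>\<^sub>E ?S. exp (bulk_log_weight k \<beta> J B n \<tau> +
       (\<Sum>y\<in>?W. \<rho> y * (\<beta> * J * \<tau> (butlast y) + (g y + \<beta> * B)))))"
  proof -
    have "(\<Sum>y\<in>?W. g y * (if y \<in> ball_V k n then \<tau> y else \<rho> y)) = (\<Sum>y\<in>?W. g y * \<rho> y)" for \<tau> \<rho>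
      using ball_V_Int_sphere_W_Suc by (intro sum.cong) auto
    then show ?thesis
      unfolding partition_fn_eq_bulk_log_weight ball_V_Suc
        sum_PiE_Un_disjoint[OF ball_V_Int_sphere_W_Suc] bulk_log_weight_Suc
      by (simp add: algebra_simps sum.distrib)
  qed
  also have "\<dots> = (\<Sum>\<tau>\<in>ball_V k n \<rightarrow>\<^sub>E ?S. exp (bulk_log_weight k \<beta> J B n \<tau>) *
     (\<Sum>\<rho>\<in>?W \<rightarrow>\<^sub>E ?S. \<Prod>y\<in>?W. exp (\<rho> y * (\<beta> * J * \<tau> (butlast y) + (g y + \<beta> * B)))))"
    by (simp add: exp_add exp_sum finite_sphere_W sum_distrib_left)
  also have "\<dots> = (\<Sum>\<tau>\<in>ball_V k n \<rightarrow>\<^sub>E ?S. exp (bulk_log_weight k \<beta> J B n \<tau>) *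
     (\<Prod>y\<in>?W. \<Sum>s\<in>?S. exp (s * (\<beta> * J * \<tau> (butlast y) + (g y + \<beta> * B)))))"
    by (intro sum.cong refl arg_cong[where f = "(*) _"] prod_sum_PiE[symmetric])
      (simp_all add: finite_sphere_W)
  finally show ?thesis .
qed

lemma partition_fn_Suc_compatible:
  assumes "n \<ge> 1" and "\<beta> \<noteq> 0"
    and field_outer: "\<And>y. y \<in> sphere_W k (Suc n) \<Longrightarrow> g y = c"
    and field_inner: "\<And>x. x \<in> sphere_W k n \<Longrightarrow> g x = real k * f_theta (tanh (\<beta> * J)) (c + \<beta> * B)"
  shows "partition_fn k \<beta> J B g (Suc n) =
         exp (\<beta> * d_fun \<beta> J B c) ^ card (sphere_W k (Suc n)) * partition_fn k \<beta> J B g n"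
proof -
  let ?W = "sphere_W k (Suc n)" and ?S = "{-1, 1 :: real}"
  define E where "E = exp (\<beta> * d_fun \<beta> J B c)"
  define F where "F = f_theta (tanh (\<beta> * J)) (c + \<beta> * B)"
  have factor: "(\<Sum>s\<in>?S. exp (s * (\<beta> * J * t + (c + \<beta> * B)))) = E * exp (t * F)" if "t \<in> ?S" for t
  proof -
    have "c + \<beta> * B + \<beta> * J = c + \<beta> * (B + J)" "c + \<beta> * B - \<beta> * J = c + \<beta> * (B - J)"
      by (simp_all add: algebra_simps)
    with sum_spin_exp[OF that, of "\<beta> * J" "c + \<beta> * B"] \<open>\<beta> \<noteq> 0\<close> show ?thesis
      by (simp add: E_def F_def d_fun_def f_theta_def exp_add)
  qed
  have "(\<Prod>y\<in>?W. \<Sum>s\<in>?S. exp (s * (\<beta> * J * \<tau> (butlast y) + (g y + \<beta> * B)))) =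
        E ^ card ?W * exp (\<Sum>x\<in>sphere_W k n. g x * \<tau> x)" if "\<tau> \<in> ball_V k n \<rightarrow>\<^sub>E ?S" for \<tau>
  proof -
    have "(\<Prod>y\<in>?W. \<Sum>s\<in>?S. exp (s * (\<beta> * J * \<tau> (butlast y) + (g y + \<beta> * B)))) =
          (\<Prod>y\<in>?W. E * exp (\<tau> (butlast y) * F))"
    proof (rule prod.cong[OF refl])
      fix y assume y: "y \<in> ?W"
      then have "\<tau> (butlast y) \<in> ?S"
        using \<open>\<tau> \<in> ball_V k n \<rightarrow>\<^sub>E ?S\<close> butlast_sphere_W_Suc sphere_W_subset_ball_V by blast
      then show "(\<Sum>s\<in>?S. exp (s * (\<beta> * J * \<tau> (butlast y) + (g y + \<beta> * B)))) =
                 E * exp (\<tau> (butlast y) * F)"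
        unfolding field_outer[OF y] by (rule factor)
    qed
    also have "\<dots> = E ^ card ?W * exp (\<Sum>y\<in>?W. \<tau> (butlast y) * F)"
      by (simp add: prod.distrib exp_sum finite_sphere_W)
    also have "(\<Sum>y\<in>?W. \<tau> (butlast y) * F) = real k * (\<Sum>x\<in>sphere_W k n. \<tau> x * F)"
      by (rule sum_sphere_W_Suc_butlast[OF \<open>n \<ge> 1\<close>])
    also have "\<dots> = (\<Sum>x\<in>sphere_W k n. g x * \<tau> x)"
      by (simp add: sum_distrib_left field_inner F_def mult_ac)
    finally show ?thesis .
  qed
  then show ?thesis
    unfolding partition_fn_Suc partition_fn_eq_bulk_log_weight[of k \<beta> J B g n] E_def[symmetric]
    by (simp add: sum_distrib_left exp_add mult_ac cong: sum.cong)
qed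

lemma ln_partition_fn_periodic_Suc:
  fixes k :: nat and \<beta> J B h h' :: real and hb :: "nat list \<Rightarrow> real"
  assumes "\<beta> \<noteq> 0" and "n \<ge> 1"
    and "h = real k * f_theta (tanh (\<beta> * J)) (h' + \<beta> * B)"
    and "h' = real k * f_theta (tanh (\<beta> * J)) (h + \<beta> * B)"
    and hb: "\<And>x. hb x = (if even (length x) then h else h')"
  shows "ln (partition_fn k \<beta> J B hb (Suc n)) / \<beta> =
         ln (partition_fn k \<beta> J B hb n) / \<beta> +
         real (card (sphere_W k (Suc n))) * d_fun \<beta> J B (if even (Suc n) then h else h')"
proof -
  let ?c = "if even (Suc n) then h else h'"
  have "partition_fn k \<beta> J B hb (Suc n) =
        exp (\<beta> * d_fun \<beta> J B ?c) ^ card (sphere_W k (Suc n)) * partition_fn k \<beta> J B hb n"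
    by (rule partition_fn_Suc_compatible)
      (use assms in \<open>auto simp: hb sphere_W_def\<close>)
  then show ?thesis
    using partition_fn_pos[of k \<beta> J B hb n] \<open>\<beta> \<noteq> 0\<close>
    by (simp add: ln_mult ln_realpow field_simps)
qed

lemma ln_partition_fn_periodic_two_step:
  fixes k :: nat and \<beta> J B h h' :: real and hb :: "nat list \<Rightarrow> real"
  assumes "\<beta> \<noteq> 0" and "n \<ge> 1"
    and "h = real k * f_theta (tanh (\<beta> * J)) (h' + \<beta> * B)"
    and "h' = real k * f_theta (tanh (\<beta> * J)) (h + \<beta> * B)"
    and hb: "\<And>x. hb x = (if even (length x) then h else h')"
  defines "L \<equiv> \<lambda>n. ln (partition_fn k \<beta> J B hb n) / \<beta>"
    and "V \<equiv> \<lambda>n. real (card (ball_V k n))"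
    and "c \<equiv> \<lambda>n::nat. if even n then h else h'"
  shows "L (Suc (Suc n)) - L n =
    (d_fun \<beta> J B (c (Suc n)) + real k * d_fun \<beta> J B (c (Suc (Suc n)))) / (real k + 1) *
    (V (Suc (Suc n)) - V n)"
proof -
  define w where "w = real (card (sphere_W k (Suc n)))"
  have "L (Suc (Suc n)) - L n = w * (d_fun \<beta> J B (c (Suc n)) + real k * d_fun \<beta> J B (c (Suc (Suc n))))"
    using ln_partition_fn_periodic_Suc[OF assms(1) _ assms(3,4) hb, of n]
      ln_partition_fn_periodic_Suc[OF assms(1) _ assms(3,4) hb, of "Suc n"]
      card_sphere_W_Suc[of "Suc n" k] \<open>n \<ge> 1\<close>
    by (simp add: L_def c_def w_def algebra_simps)
  moreover have "V (Suc (Suc n)) - V n = w * (real k + 1)"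
    using card_sphere_W_Suc[of "Suc n" k]
    by (simp add: V_def w_def card_ball_V_Suc algebra_simps)
  ultimately show ?thesis
    by (simp add: field_simps)
qed

lemma LIMSEQ_divide_of_proportional_increments:
  fixes P Q :: "nat \<Rightarrow> real"
  assumes increments: "\<And>m. m \<ge> M \<Longrightarrow> P (Suc m) - P m = l * (Q (Suc m) - Q m)"
    and Q: "filterlim Q at_top sequentially"
  shows "(\<lambda>m. P m / Q m) \<longlonglongrightarrow> l"
proof -
  define C where "C = P M - l * Q M"
  have affine: "P m = l * Q m + C" if "m \<ge> M" for m
    using that
  proof (induction m rule: dec_induct)
    case (step m)
    with increments[of m] show ?case by (simp add: algebra_simps)
  qed (simp add: C_def)
  have "(\<lambda>m. l + C / Q m) \<longlonglongrightarrow> l + 0"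
    by (intro tendsto_intros tendsto_divide_0[OF tendsto_const] filterlim_at_top_imp_at_infinity Q)
  moreover have "\<forall>\<^sub>F m in sequentially. l + C / Q m = P m / Q m"
    using eventually_ge_at_top[of M] Q[unfolded filterlim_at_top_dense, rule_format, of 0]
    by eventually_elim (simp add: affine field_simps)
  ultimately show ?thesis
    by (simp add: Lim_transform_eventually)
qed

theorem proposition3:
  fixes k :: nat and \<beta> J B h h' :: real
  assumes "k \<ge> 2" and "\<beta> > 0"
    and "h = real k * f_theta (tanh (\<beta> * J)) (h' + \<beta> * B)"
    and "h' = real k * f_theta (tanh (\<beta> * J)) (h + \<beta> * B)"
  defines "hb \<equiv> (\<lambda>x::nat list. if even (length x) then h else h')"
  shows "((\<lambda>m. free_energy k \<beta> J B hb (2 * m))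
           \<longlonglongrightarrow> - (1 / (real k + 1)) * (real k * d_fun \<beta> J B h + d_fun \<beta> J B h')) \<and>
         ((\<lambda>m. free_energy k \<beta> J B hb (2 * m + 1))
           \<longlonglongrightarrow> - (1 / (real k + 1)) * (d_fun \<beta> J B h + real k * d_fun \<beta> J B h'))"
proof -
  define L where "L = (\<lambda>n. ln (partition_fn k \<beta> J B hb n) / \<beta>)"
  define V where "V = (\<lambda>n. real (card (ball_V k n)))"
  have free_energy_eq: "free_energy k \<beta> J B hb n = - (L n / V n)" for n
    by (simp add: free_energy_def L_def V_def)
  have two_step: "L (Suc (Suc n)) - L n =
      (d_fun \<beta> J B (if even (Suc n) then h else h') + real k * d_fun \<beta> J B (if even n then h else h')) /
      (real k + 1) * (V (Suc (Suc n)) - V n)" if "n \<ge> 1" for n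
    using ln_partition_fn_periodic_two_step[OF _ that assms(3,4), of hb] \<open>\<beta> > 0\<close>
    by (simp add: L_def V_def hb_def)
  have V_top: "filterlim (\<lambda>m. V (2 * m + r)) at_top sequentially" for r
    unfolding V_def using \<open>k \<ge> 2\<close>
    by (intro filterlim_compose[OF filterlim_card_ball_V] filterlim_subseq) (auto simp: strict_mono_def)
  have "(\<lambda>m. L (2 * m) / V (2 * m)) \<longlonglongrightarrow> (real k * d_fun \<beta> J B h + d_fun \<beta> J B h') / (real k + 1)"
    using LIMSEQ_divide_of_proportional_increments[of 1 "\<lambda>m. L (2 * m)"] two_step V_top[of 0]
    by (simp add: field_simps)
  moreover have "(\<lambda>m. L (2 * m + 1) / V (2 * m + 1)) \<longlonglongrightarrow> (d_fun \<beta> J B h + real k * d_fun \<beta> J B h') / (real k + 1)"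
    using LIMSEQ_divide_of_proportional_increments[of 0 "\<lambda>m. L (2 * m + 1)"] two_step V_top[of 1]
    by (simp add: field_simps)
  ultimately show ?thesis
    unfolding free_energy_eq by (auto intro: tendsto_minus)
qed

end
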